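(* Let $N\ge 1$, let $\rho$ be any $N$-qubit density matrix, let $O$ be any Hermitian $2^N\times 2^N$ matrix, and let $\hat\sigma$ be a SIC POVM classical shadow of $\rho$. Then $$\mathrm{Var}\big[\mathrm{tr}(O\hat\sigma)\big]\le 3^N\,\mathrm{tr}(O^2).$$
   Context: Let $|\psi_1\rangle,\dots,|\psi_4\rangle\in\mathbb C^2$ be unit vectors forming a single-qubit SIC set, i.e. $|\langle\psi_i|\psi_j\rangle|^2=1/3$ for all $i\neq j$ (their Bloch vectors form a regular tetrahedron); then $\{\tfrac12|\psi_i\rangle\langle\psi_i|\}_{i=1}^4$ is a POVM (the single-qubit SIC POVM). Performing this measurement on each qubit of an $N$-qubit state $\rho$ yields an outcome string $(i_1,\dots,i_N)\in\{1,2,3,4\}^N$ with probability $\Pr[i_1\cdots i_N\mid\rho]=2^{-N}\langle\psi_{i_1}\otimes\cdots\otimes\psi_{i_N}|\,\rho\,|\psi_{i_1}\otimes\cdots\otimes\psi_{i_N}\rangle$. The (SIC POVM) classical shadow associated with this random outcome is the random Hermitian matrix $\hat\sigma=\bigotimes_{n=1}^N\big(3|\psi_{i_n}\rangle\langle\psi_{i_n}|-\mathbb I\big)$. Expectations and variances are taken with respect to the outcome distribution. *)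

theory Defs
  imports "Jordan_Normal_Form.Matrix"
begin

definition braket :: "complex vec \<Rightarrow> complex vec \<Rightarrow> complex" where
  "braket u v = (\<Sum>k<dim_vec u. cnj (u $ k) * v $ k)"

definition mat_trace :: "complex mat \<Rightarrow> complex" where
  "mat_trace A = (\<Sum>i<dim_row A. A $$ (i, i))"

definition hermitian_mat :: "complex mat \<Rightarrow> bool" where
  "hermitian_mat A \<longleftrightarrow> square_mat A \<and>
     (\<forall>i<dim_row A. \<forall>j<dim_row A. A $$ (i, j) = cnj (A $$ (j, i)))"

definition density_mat :: "nat \<Rightarrow> complex mat \<Rightarrow> bool" where
  "density_mat N \<rho> \<longleftrightarrow> \<rho> \<in> carrier_mat (2^N) (2^N) \<and> hermitian_mat \<rho> \<and>
     (\<forall>v \<in> carrier_vec (2^N). 0 \<le> Re (braket v (\<rho> *\<^sub>v v))) \<and> mat_trace \<rho> = 1"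

(* Kronecker (tensor) products; the first factor is the most significant index *)
definition kron_vec :: "complex vec \<Rightarrow> complex vec \<Rightarrow> complex vec" where
  "kron_vec u v = vec (dim_vec u * dim_vec v) (\<lambda>i. u $ (i div dim_vec v) * v $ (i mod dim_vec v))"

definition kron_mat :: "complex mat \<Rightarrow> complex mat \<Rightarrow> complex mat" where
  "kron_mat A B = mat (dim_row A * dim_row B) (dim_col A * dim_col B)
     (\<lambda>(i, j). A $$ (i div dim_row B, j div dim_col B) * B $$ (i mod dim_row B, j mod dim_col B))"

definition tensor_vecs :: "complex vec list \<Rightarrow> complex vec" where
  "tensor_vecs vs = foldr kron_vec vs (vec 1 (\<lambda>_. 1))"

definition tensor_mats :: "complex mat list \<Rightarrow> complex mat" where
  "tensor_mats As = foldr kron_mat As (1\<^sub>m 1)"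

definition proj :: "complex vec \<Rightarrow> complex mat" where
  "proj v = mat (dim_vec v) (dim_vec v) (\<lambda>(i, j). v $ i * cnj (v $ j))"

(* single-qubit SIC set, outcomes labelled 0..3 instead of 1..4 *)
definition sic_set :: "(nat \<Rightarrow> complex vec) \<Rightarrow> bool" where
  "sic_set \<psi> \<longleftrightarrow> (\<forall>i<4. \<psi> i \<in> carrier_vec 2 \<and> braket (\<psi> i) (\<psi> i) = 1) \<and>
     (\<forall>i<4. \<forall>j<4. i \<noteq> j \<longrightarrow> (cmod (braket (\<psi> i) (\<psi> j)))^2 = 1/3)"

definition outcomes :: "nat \<Rightarrow> nat list set" where
  "outcomes N = {is. length is = N \<and> set is \<subseteq> {..<4}}"

definition sic_prob :: "(nat \<Rightarrow> complex vec) \<Rightarrow> nat \<Rightarrow> complex mat \<Rightarrow> nat list \<Rightarrow> real" where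
  "sic_prob \<psi> N \<rho> is =
     (let \<Psi> = tensor_vecs (map \<psi> is) in Re (braket \<Psi> (\<rho> *\<^sub>v \<Psi>)) / 2^N)"

definition sic_shadow :: "(nat \<Rightarrow> complex vec) \<Rightarrow> nat list \<Rightarrow> complex mat" where
  "sic_shadow \<psi> is = tensor_mats (map (\<lambda>i. 3 \<cdot>\<^sub>m proj (\<psi> i) - 1\<^sub>m 2) is)"

definition sic_expect :: "(nat \<Rightarrow> complex vec) \<Rightarrow> nat \<Rightarrow> complex mat \<Rightarrow> (nat list \<Rightarrow> complex) \<Rightarrow> complex" where
  "sic_expect \<psi> N \<rho> X = (\<Sum>is\<in>outcomes N. complex_of_real (sic_prob \<psi> N \<rho> is) * X is)"

definition sic_var :: "(nat \<Rightarrow> complex vec) \<Rightarrow> nat \<Rightarrow> complex mat \<Rightarrow> (nat list \<Rightarrow> complex) \<Rightarrow> real" where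
  "sic_var \<psi> N \<rho> X =
     (\<Sum>is\<in>outcomes N. sic_prob \<psi> N \<rho> is * (cmod (X is - sic_expect \<psi> N \<rho> X))^2)"

end

theory Submission
  imports Defs
begin

text \<open>The variance is at most the second moment \<open>\<Sum>\<^sub>i p(i) |tr (O \<sigma>\<^sub>i)|\<^sup>2\<close>. Every outcome
  probability is at most \<open>2\<^sup>-\<^sup>N\<close>: the product vector \<open>\<psi>\<^sub>i\<^sub>1 \<otimes> \<dots> \<otimes> \<psi>\<^sub>i\<^sub>N\<close> is a member of an
  orthonormal product basis and \<open>\<rho>\<close> is positive of unit trace. The single-qubit factors
  \<open>Q\<^sub>i = 3 |\<psi>\<^sub>i\<rangle>\<langle>\<psi>\<^sub>i| - 1\<close> have Gram matrix \<open>tr (Q\<^sub>i Q\<^sub>j) = 6 \<delta>\<^sub>i\<^sub>j - 1\<close>, whose largest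
  eigenvalue is \<open>6\<close>, so \<open>\<Sum>\<^sub>i |tr (A Q\<^sub>i)|\<^sup>2 \<le> 6 \<parallel>A\<parallel>\<^sup>2\<close> in the Frobenius norm. Peeling off one qubit
  at a time by partial traces gives \<open>\<Sum>\<^sub>i |tr (O \<sigma>\<^sub>i)|\<^sup>2 \<le> 6\<^sup>N tr (O\<^sup>2)\<close>, and
  \<open>2\<^sup>-\<^sup>N 6\<^sup>N = 3\<^sup>N\<close>.\<close>

lemma sum_lessThan_mult:
  fixes g :: "nat \<Rightarrow> 'a::comm_monoid_add"
  shows "(\<Sum>x<k * m. g x) = (\<Sum>a<k. \<Sum>b<m. g (a * m + b))"
proof -
  have "(\<Sum>x<k * m. g x) = (\<Sum>a<k. sum g {a * m..<a * m + m})"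
    by (rule sum.nat_group[symmetric])
  also have "\<dots> = (\<Sum>a<k. \<Sum>b<m. g (a * m + b))"
    using sum.shift_bounds_nat_ivl[of g 0 "_ * m" m]
    by (simp add: add.commute atLeast0LessThan)
  finally show ?thesis .
qed

lemma sum_lessThan_mult_square:
  fixes f :: "nat \<Rightarrow> nat \<Rightarrow> 'a::comm_monoid_add"
  shows "(\<Sum>x<d * n. \<Sum>y<d * n. f x y) =
    (\<Sum>a<n. \<Sum>b<n. \<Sum>p\<in>{..<d} \<times> {..<d}. f (fst p * n + a) (snd p * n + b))"
proof -
  have "(\<Sum>x<d * n. \<Sum>y<d * n. f x y) = (\<Sum>a1<d. \<Sum>a<n. \<Sum>b1<d. \<Sum>b<n. f (a1 * n + a) (b1 * n + b))"
    by (simp add: sum_lessThan_mult)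
  also have "\<dots> = (\<Sum>a<n. \<Sum>a1<d. \<Sum>b1<d. \<Sum>b<n. f (a1 * n + a) (b1 * n + b))"
    by (rule sum.swap)
  also have "\<dots> = (\<Sum>a<n. \<Sum>a1<d. \<Sum>b<n. \<Sum>b1<d. f (a1 * n + a) (b1 * n + b))"
    by (rule sum.cong[OF refl], rule sum.cong[OF refl], rule sum.swap)
  also have "\<dots> = (\<Sum>a<n. \<Sum>b<n. \<Sum>a1<d. \<Sum>b1<d. f (a1 * n + a) (b1 * n + b))"
    by (rule sum.cong[OF refl], rule sum.swap)
  also have "\<dots> = (\<Sum>a<n. \<Sum>b<n. \<Sum>p\<in>{..<d} \<times> {..<d}. f (fst p * n + a) (snd p * n + b))"
    by (simp add: sum.cartesian_product split_def)
  finally show ?thesis .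
qed

lemma sum_lists_length_Suc:
  "(\<Sum>xs\<in>{xs. set xs \<subseteq> A \<and> length xs = Suc n}. g xs) =
     (\<Sum>a\<in>A. \<Sum>xs\<in>{xs. set xs \<subseteq> A \<and> length xs = n}. g (a # xs))"
proof -
  let ?L = "{xs. set xs \<subseteq> A \<and> length xs = n}"
  have "(\<Sum>xs\<in>{xs. set xs \<subseteq> A \<and> length xs = Suc n}. g xs) = (\<Sum>p\<in>?L \<times> A. g (snd p # fst p))"
    unfolding lists_length_Suc_eq by (subst sum.reindex[OF inj_split_Cons]) (simp add: comp_def split_def)
  also have "\<dots> = (\<Sum>xs\<in>?L. \<Sum>a\<in>A. g (a # xs))"
    by (simp add: sum.cartesian_product split_def)
  also have "\<dots> = (\<Sum>a\<in>A. \<Sum>xs\<in>?L. g (a # xs))"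
    by (rule sum.swap)
  finally show ?thesis .
qed

lemma sum_lessThan_2: "(\<Sum>a<2::nat. f a) = f 0 + f 1"
  by (simp add: numeral_2_eq_2)

lemma sum_lessThan_4: "(\<Sum>a<4::nat. f a) = f 0 + f 1 + f 2 + f 3"
  by (simp add: eval_nat_numeral add_ac)

lemma outcomes_eq: "outcomes N = {is. set is \<subseteq> {..<4} \<and> length is = N}"
  by (auto simp: outcomes_def)

lemma finite_outcomes: "finite (outcomes N)"
  unfolding outcomes_eq by (simp add: finite_lists_length_eq)

lemma sum_outcomes_Suc: "(\<Sum>is\<in>outcomes (Suc N). g is) = (\<Sum>i<4. \<Sum>js\<in>outcomes N. g (i # js))"
  unfolding outcomes_eq by (rule sum_lists_length_Suc)

lemma mat_trace_mult:
  assumes "A \<in> carrier_mat n m" and "B \<in> carrier_mat m n"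
  shows "mat_trace (A * B) = (\<Sum>x<n. \<Sum>y<m. A $$ (x, y) * B $$ (y, x))"
proof -
  have "(A * B) $$ (x, x) = (\<Sum>y<m. A $$ (x, y) * B $$ (y, x))" if "x < n" for x
    using assms that by (simp add: scalar_prod_def atLeast0LessThan)
  then show ?thesis
    using assms by (simp add: mat_trace_def)
qed

lemma braket_mult_mat_vec:
  assumes "dim_vec u = n" and "A \<in> carrier_mat n n"
  shows "braket u (A *\<^sub>v u) = (\<Sum>x<n. \<Sum>y<n. cnj (u $ x) * A $$ (x, y) * u $ y)"
  using assms unfolding braket_def by (simp add: scalar_prod_def atLeast0LessThan sum_distrib_left mult_ac)

lemma dim_kron_vec [simp]: "dim_vec (kron_vec u v) = dim_vec u * dim_vec v"
  by (simp add: kron_vec_def)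

lemma index_kron_vec:
  "i < dim_vec u * dim_vec v \<Longrightarrow> kron_vec u v $ i = u $ (i div dim_vec v) * v $ (i mod dim_vec v)"
  by (simp add: kron_vec_def)

lemma dim_kron_mat [simp]:
  "dim_row (kron_mat A B) = dim_row A * dim_row B"
  "dim_col (kron_mat A B) = dim_col A * dim_col B"
  by (simp_all add: kron_mat_def)

lemma index_kron_mat:
  "i < dim_row A * dim_row B \<Longrightarrow> j < dim_col A * dim_col B \<Longrightarrow>
    kron_mat A B $$ (i, j) = A $$ (i div dim_row B, j div dim_col B) * B $$ (i mod dim_row B, j mod dim_col B)"
  by (simp add: kron_mat_def)

definition frobenius_norm_sq :: "complex mat \<Rightarrow> real" where
  "frobenius_norm_sq A = (\<Sum>a<dim_row A. \<Sum>b<dim_col A. (cmod (A $$ (a, b)))\<^sup>2)"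

lemma hermitian_trace_square:
  assumes A: "A \<in> carrier_mat n n" and "hermitian_mat A"
  shows "Re (mat_trace (A * A)) = frobenius_norm_sq A"
proof -
  have "dim_row A = n"
    using A by simp
  then have herm: "\<forall>i<n. \<forall>j<n. A $$ (i, j) = cnj (A $$ (j, i))"
    using assms(2) unfolding hermitian_mat_def by blast
  have "mat_trace (A * A) = (\<Sum>x<n. \<Sum>y<n. A $$ (x, y) * cnj (A $$ (x, y)))"
    unfolding mat_trace_mult[OF A A]
  proof (intro sum.cong refl)
    fix x y assume "x \<in> {..<n}" "y \<in> {..<n}"
    then have "A $$ (y, x) = cnj (A $$ (x, y))"
      using herm by blast
    then show "A $$ (x, y) * A $$ (y, x) = A $$ (x, y) * cnj (A $$ (x, y))"
      by (simp only:)
  qed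
  also have "\<dots> = (\<Sum>x<n. \<Sum>y<n. complex_of_real ((cmod (A $$ (x, y)))\<^sup>2))"
    by (simp only: complex_norm_square)
  finally show ?thesis
    using A by (simp add: frobenius_norm_sq_def)
qed

section \<open>Tensor products of resolutions of the identity\<close>

definition tensor_family :: "(nat \<Rightarrow> complex vec) list \<Rightarrow> nat list \<Rightarrow> complex vec" where
  "tensor_family fs ks = tensor_vecs (map2 (\<lambda>f k. f k) fs ks)"

lemma tensor_family_Nil [simp]: "tensor_family [] ks = vec 1 (\<lambda>_. 1)"
  by (simp add: tensor_family_def tensor_vecs_def)

lemma tensor_family_Cons [simp]:
  "tensor_family (f # fs) (k # ks) = kron_vec (f k) (tensor_family fs ks)"
  by (simp add: tensor_family_def tensor_vecs_def)

lemma tensor_family_replicate: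
  "length ks = n \<Longrightarrow> tensor_family (replicate n f) ks = tensor_vecs (map f ks)"
  by (induction ks arbitrary: n) (auto simp: tensor_vecs_def)

lemma tensor_family_diagonal:
  "tensor_family (map F is) (replicate (length is) k) = tensor_vecs (map (\<lambda>i. F i k) is)"
  by (induction "is") (auto simp: tensor_vecs_def)

lemma dim_tensor_family:
  assumes "\<And>f k. f \<in> set fs \<Longrightarrow> k < m \<Longrightarrow> dim_vec (f k) = d"
    and "set ks \<subseteq> {..<m}" and "length ks = length fs"
  shows "dim_vec (tensor_family fs ks) = d ^ length fs"
  using assms
proof (induction fs arbitrary: ks)
  case (Cons f fs)
  then obtain k ks' where "ks = k # ks'" by (cases ks) auto
  with Cons show ?case by simp
qed simp

lemma tensor_family_resolution:
  assumes dims: "\<And>f k. f \<in> set fs \<Longrightarrow> k < m \<Longrightarrow> dim_vec (f k) = d"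
    and res: "\<And>f a b. f \<in> set fs \<Longrightarrow> a < d \<Longrightarrow> b < d \<Longrightarrow>
      (\<Sum>k<m. f k $ a * cnj (f k $ b)) = (if a = b then c else 0)"
    and "a < d ^ length fs" and "b < d ^ length fs"
  shows "(\<Sum>ks\<in>{ks. set ks \<subseteq> {..<m} \<and> length ks = length fs}.
      tensor_family fs ks $ a * cnj (tensor_family fs ks $ b)) = (if a = b then c ^ length fs else 0)"
  using assms
proof (induction fs arbitrary: a b)
  case Nil
  have "{ks. set ks \<subseteq> {..<m} \<and> length ks = 0} = {[]}" by auto
  then show ?case using Nil by simp
next
  case (Cons f fs)
  let ?n = "d ^ length fs"
  let ?S = "{ks. set ks \<subseteq> {..<m} \<and> length ks = length fs}"
  let ?T = "tensor_family fs"
  have a: "a < d * ?n" and b: "b < d * ?n" using Cons.prems by auto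
  have dT: "ks \<in> ?S \<Longrightarrow> dim_vec (?T ks) = ?n" for ks
    using dim_tensor_family[of fs m d ks] Cons.prems(1) by auto
  have entry: "x < d * ?n \<Longrightarrow> k < m \<Longrightarrow> ks \<in> ?S \<Longrightarrow>
      kron_vec (f k) (?T ks) $ x = f k $ (x div ?n) * ?T ks $ (x mod ?n)" for x k ks
    using Cons.prems(1) by (simp add: index_kron_vec dT)
  have "(\<Sum>ks\<in>{ks. set ks \<subseteq> {..<m} \<and> length ks = length (f # fs)}.
        tensor_family (f # fs) ks $ a * cnj (tensor_family (f # fs) ks $ b))
      = (\<Sum>k<m. \<Sum>ks\<in>?S. (f k $ (a div ?n) * cnj (f k $ (b div ?n))) *
          (?T ks $ (a mod ?n) * cnj (?T ks $ (b mod ?n))))"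
    unfolding length_Cons sum_lists_length_Suc
    by (intro sum.cong refl) (simp add: entry[OF a] entry[OF b])
  also have "\<dots> = (\<Sum>k<m. f k $ (a div ?n) * cnj (f k $ (b div ?n))) *
      (\<Sum>ks\<in>?S. ?T ks $ (a mod ?n) * cnj (?T ks $ (b mod ?n)))"
    by (rule sum_product[symmetric])
  also have "\<dots> = (if a div ?n = b div ?n then c else 0) * (if a mod ?n = b mod ?n then c ^ length fs else 0)"
  proof -
    have "?n > 0"
      using a by (metis mult_0_right not_less0 gr0I)
    have "(\<Sum>ks\<in>?S. ?T ks $ (a mod ?n) * cnj (?T ks $ (b mod ?n))) =
        (if a mod ?n = b mod ?n then c ^ length fs else 0)"
    proof (rule Cons.IH)
      show "\<And>g k. g \<in> set fs \<Longrightarrow> k < m \<Longrightarrow> dim_vec (g k) = d"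
        using Cons.prems(1) by simp
      show "\<And>g a b. g \<in> set fs \<Longrightarrow> a < d \<Longrightarrow> b < d \<Longrightarrow>
          (\<Sum>k<m. g k $ a * cnj (g k $ b)) = (if a = b then c else 0)"
        using Cons.prems(2) by simp
    qed (rule mod_less_divisor[OF \<open>?n > 0\<close>])+
    moreover have "(\<Sum>k<m. f k $ (a div ?n) * cnj (f k $ (b div ?n))) = (if a div ?n = b div ?n then c else 0)"
      using Cons.prems(2) a b by (simp add: less_mult_imp_div_less)
    ultimately show ?thesis by simp
  qed
  also have "\<dots> = (if a = b then c ^ length (f # fs) else 0)"
  proof (cases "a = b")
    case False
    then have "a div ?n \<noteq> b div ?n \<or> a mod ?n \<noteq> b mod ?n"
      by (metis div_mult_mod_eq)
    with False show ?thesis by auto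
  qed simp
  finally show ?case .
qed

lemma sum_braket_resolution:
  assumes "finite S" and dims: "\<And>s. s \<in> S \<Longrightarrow> dim_vec (v s) = n"
    and res: "\<And>x y. x < n \<Longrightarrow> y < n \<Longrightarrow> (\<Sum>s\<in>S. v s $ y * cnj (v s $ x)) = (if x = y then c else 0)"
    and A: "A \<in> carrier_mat n n"
  shows "(\<Sum>s\<in>S. braket (v s) (A *\<^sub>v v s)) = c * mat_trace A"
proof -
  have "(\<Sum>s\<in>S. braket (v s) (A *\<^sub>v v s)) = (\<Sum>s\<in>S. \<Sum>x<n. \<Sum>y<n. cnj (v s $ x) * A $$ (x, y) * v s $ y)"
    by (intro sum.cong refl) (simp add: braket_mult_mat_vec[OF dims A])
  also have "\<dots> = (\<Sum>x<n. \<Sum>y<n. A $$ (x, y) * (\<Sum>s\<in>S. v s $ y * cnj (v s $ x)))"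
    by (simp add: sum_distrib_left sum.swap[of _ S] mult_ac)
  also have "\<dots> = (\<Sum>x<n. \<Sum>y<n. A $$ (x, y) * (if x = y then c else 0))"
    by (simp add: res)
  also have "\<dots> = c * mat_trace A"
    using A by (simp add: mat_trace_def sum_distrib_left mult.commute if_distrib cong: if_cong)
  finally show ?thesis .
qed

section \<open>A frame bound\<close>

lemma of_real_cmod_power2: "(complex_of_real (cmod z))\<^sup>2 = z * cnj z"
  using complex_norm_square[of z] by simp

lemma norm_synthesis_of_gram:
  fixes q :: "'i \<Rightarrow> 'p \<Rightarrow> complex" and a :: "'i \<Rightarrow> complex" and c d :: real
  assumes "finite I"
    and gram: "\<And>i j. i \<in> I \<Longrightarrow> j \<in> I \<Longrightarrow>
      (\<Sum>p\<in>P. cnj (q i p) * q j p) = (if i = j then of_real c else 0) - of_real d"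
  shows "(\<Sum>p\<in>P. (\<Sum>i\<in>I. a i * q i p) * cnj (\<Sum>i\<in>I. a i * q i p)) =
    of_real c * (\<Sum>i\<in>I. a i * cnj (a i)) - of_real d * ((\<Sum>i\<in>I. a i) * cnj (\<Sum>i\<in>I. a i))"
proof -
  have gram': "(\<Sum>p\<in>P. q i p * cnj (q j p)) = (if i = j then of_real c else 0) - of_real d"
    if "i \<in> I" "j \<in> I" for i j
    using arg_cong[OF gram[OF that], of cnj] by (simp add: mult.commute)
  have "(\<Sum>p\<in>P. (\<Sum>i\<in>I. a i * q i p) * cnj (\<Sum>i\<in>I. a i * q i p)) =
      (\<Sum>i\<in>I. \<Sum>j\<in>I. a i * cnj (a j) * (\<Sum>p\<in>P. q i p * cnj (q j p)))"
    by (simp add: sum_product sum_distrib_left sum.swap[of _ P] mult_ac)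
      (rule sum.cong[OF refl], rule sum.swap)
  also have "\<dots> = (\<Sum>i\<in>I. \<Sum>j\<in>I. if i = j then of_real c * (a i * cnj (a j)) else 0)
      - (\<Sum>i\<in>I. \<Sum>j\<in>I. of_real d * (a i * cnj (a j)))"
    unfolding sum_subtractf[symmetric] by (intro sum.cong refl) (simp add: gram' algebra_simps)
  also have "(\<Sum>i\<in>I. \<Sum>j\<in>I. if i = j then of_real c * (a i * cnj (a j)) else 0) =
      of_real c * (\<Sum>i\<in>I. a i * cnj (a i))"
    using \<open>finite I\<close> by (simp add: sum_distrib_left)
  also have "(\<Sum>i\<in>I. \<Sum>j\<in>I. of_real d * (a i * cnj (a j))) = of_real d * ((\<Sum>i\<in>I. a i) * cnj (\<Sum>i\<in>I. a i))"
    unfolding cnj_sum sum_product by (simp only: sum_distrib_left)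
  finally show ?thesis .
qed

text \<open>The Gram matrix \<open>c \<cdot> 1 - d \<cdot> J\<close> has largest eigenvalue \<open>c\<close>. The bound is
  \<open>\<parallel>M - S/c\<parallel>\<^sup>2 \<ge> 0\<close> for \<open>S = \<Sum>\<^sub>i \<langle>q\<^sub>i, M\<rangle> q\<^sub>i\<close>, since \<open>\<parallel>S\<parallel>\<^sup>2 = c \<cdot> \<langle>M, S\<rangle> - d \<cdot> |\<Sum>\<^sub>i \<langle>q\<^sub>i, M\<rangle>|\<^sup>2\<close>.\<close>
lemma frame_bound_of_gram:
  fixes q :: "'i \<Rightarrow> 'p \<Rightarrow> complex" and M :: "'p \<Rightarrow> complex" and c d :: real
  assumes "finite I" and "c > 0" and "d \<ge> 0"
    and gram: "\<And>i j. i \<in> I \<Longrightarrow> j \<in> I \<Longrightarrow>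
      (\<Sum>p\<in>P. cnj (q i p) * q j p) = (if i = j then of_real c else 0) - of_real d"
  shows "(\<Sum>i\<in>I. (cmod (\<Sum>p\<in>P. cnj (q i p) * M p))\<^sup>2) \<le> c * (\<Sum>p\<in>P. (cmod (M p))\<^sup>2)"
proof -
  define a where "a i = (\<Sum>p\<in>P. cnj (q i p) * M p)" for i
  define C where "C = (\<Sum>i\<in>I. (cmod (a i))\<^sup>2)"
  define m where "m = (\<Sum>p\<in>P. (cmod (M p))\<^sup>2)"
  define S where "S p = (\<Sum>i\<in>I. a i * q i p)" for p
  define s where "s = (\<Sum>i\<in>I. a i)"
  have C: "complex_of_real C = (\<Sum>i\<in>I. a i * cnj (a i))"
    unfolding C_def by (simp add: of_real_cmod_power2)
  have m: "complex_of_real m = (\<Sum>p\<in>P. M p * cnj (M p))"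
    unfolding m_def by (simp add: of_real_cmod_power2)
  have cnj_a: "cnj (a i) = (\<Sum>p\<in>P. cnj (M p) * q i p)" for i
    unfolding a_def by (simp add: mult.commute)
  have MS: "(\<Sum>p\<in>P. cnj (M p) * S p) = complex_of_real C"
  proof -
    have "(\<Sum>p\<in>P. cnj (M p) * S p) = (\<Sum>i\<in>I. a i * (\<Sum>p\<in>P. cnj (M p) * q i p))"
      unfolding S_def by (simp add: sum_distrib_left sum.swap[of _ P] mult_ac)
    then show ?thesis
      unfolding C cnj_a[symmetric] .
  qed
  have "(\<Sum>p\<in>P. M p * cnj (S p)) = cnj (\<Sum>p\<in>P. cnj (M p) * S p)"
    by simp
  then have SM: "(\<Sum>p\<in>P. M p * cnj (S p)) = complex_of_real C"
    unfolding MS by simp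
  have SS: "(\<Sum>p\<in>P. S p * cnj (S p)) = of_real c * complex_of_real C - of_real d * (s * cnj s)"
    unfolding S_def s_def C by (rule norm_synthesis_of_gram[OF \<open>finite I\<close> gram])
  define L where "L = (\<Sum>p\<in>P. (cmod (M p - S p / of_real c))\<^sup>2)"
  have "complex_of_real L = (\<Sum>p\<in>P. (M p - S p / of_real c) * cnj (M p - S p / of_real c))"
    unfolding L_def by (simp add: of_real_cmod_power2)
  also have "\<dots> = (\<Sum>p\<in>P. M p * cnj (M p) - cnj (M p) * S p / of_real c
      - M p * cnj (S p) / of_real c + S p * cnj (S p) / (of_real c)\<^sup>2)"
    by (intro sum.cong refl) (simp add: algebra_simps power2_eq_square)
  also have "\<dots> = (\<Sum>p\<in>P. M p * cnj (M p)) - (\<Sum>p\<in>P. cnj (M p) * S p) / of_real c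
      - (\<Sum>p\<in>P. M p * cnj (S p)) / of_real c + (\<Sum>p\<in>P. S p * cnj (S p)) / (of_real c)\<^sup>2"
    by (simp only: sum.distrib sum_subtractf sum_divide_distrib)
  also have "\<dots> = complex_of_real m - complex_of_real C / of_real c - complex_of_real C / of_real c
      + (of_real c * complex_of_real C - of_real d * (s * cnj s)) / (of_real c)\<^sup>2"
    by (simp only: m MS SM SS)
  also have "\<dots> = complex_of_real (m - C / c - d * (cmod s)\<^sup>2 / c\<^sup>2)"
    using \<open>c > 0\<close> by (simp add: of_real_cmod_power2[symmetric] field_simps power2_eq_square)
  finally have "L = m - C / c - d * (cmod s)\<^sup>2 / c\<^sup>2"
    using of_real_eq_iff by blast
  moreover have "L \<ge> 0" "d * (cmod s)\<^sup>2 / c\<^sup>2 \<ge> 0"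
    unfolding L_def using \<open>d \<ge> 0\<close> by (auto intro: sum_nonneg)
  ultimately have "C / c \<le> m" by linarith
  then show ?thesis
    using \<open>c > 0\<close> unfolding C_def m_def a_def by (simp add: divide_le_eq mult.commute)
qed

section \<open>Equiangular frames in \<open>\<complex>\<^sup>2\<close> and SIC sets\<close>

lemma frame_potential_2:
  fixes A B :: "'i \<Rightarrow> complex"
  shows "(\<Sum>i\<in>I. \<Sum>j\<in>I. (cmod (cnj (A i) * A j + cnj (B i) * B j))\<^sup>2) =
    (\<Sum>i\<in>I. (cmod (A i))\<^sup>2)\<^sup>2 + (\<Sum>i\<in>I. (cmod (B i))\<^sup>2)\<^sup>2 + 2 * (cmod (\<Sum>i\<in>I. A i * cnj (B i)))\<^sup>2"
proof -
  define X where "X = (\<Sum>i\<in>I. A i * cnj (A i))"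
  define Y where "Y = (\<Sum>i\<in>I. B i * cnj (B i))"
  define Z where "Z = (\<Sum>i\<in>I. A i * cnj (B i))"
  have "complex_of_real (\<Sum>i\<in>I. \<Sum>j\<in>I. (cmod (cnj (A i) * A j + cnj (B i) * B j))\<^sup>2) =
      (\<Sum>i\<in>I. \<Sum>j\<in>I. (cnj (A i) * A i) * (A j * cnj (A j)) + (cnj (B i) * B i) * (B j * cnj (B j))
        + (B i * cnj (A i)) * (A j * cnj (B j)) + (A i * cnj (B i)) * (cnj (A j) * B j))"
    by (simp add: of_real_cmod_power2) (intro sum.cong refl, simp add: algebra_simps)
  also have "\<dots> = X * X + Y * Y + cnj Z * Z + Z * cnj Z"
    unfolding X_def Y_def Z_def cnj_sum
    by (simp add: sum.distrib sum_product mult.commute mult.left_commute, subst sum.swap, simp add: mult_ac)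
  also have "\<dots> = X\<^sup>2 + Y\<^sup>2 + 2 * (Z * cnj Z)"
    by (simp add: power2_eq_square algebra_simps)
  also have "\<dots> = complex_of_real ((\<Sum>i\<in>I. (cmod (A i))\<^sup>2)\<^sup>2 + (\<Sum>i\<in>I. (cmod (B i))\<^sup>2)\<^sup>2 + 2 * (cmod Z)\<^sup>2)"
  proof -
    have "complex_of_real (\<Sum>i\<in>I. (cmod (A i))\<^sup>2) = X" "complex_of_real (\<Sum>i\<in>I. (cmod (B i))\<^sup>2) = Y"
      unfolding X_def Y_def by (simp_all add: of_real_cmod_power2)
    then show ?thesis
      by (simp only: of_real_add of_real_mult of_real_power of_real_numeral of_real_cmod_power2)
  qed
  finally show ?thesis
    unfolding Z_def of_real_eq_iff .
qed

text \<open>Four unit vectors of \<open>\<complex>\<^sup>2\<close> with pairwise overlaps \<open>1/3\<close> form a tight frame: their frame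
  potential equals \<open>8 = 4\<^sup>2/2\<close>, the minimum over frames with total weight \<open>4\<close>.\<close>
lemma equiangular_tight_frame_2:
  fixes A B :: "nat \<Rightarrow> complex"
  assumes norm: "\<And>i. i < 4 \<Longrightarrow> cnj (A i) * A i + cnj (B i) * B i = 1"
    and overlap: "\<And>i j. i < 4 \<Longrightarrow> j < 4 \<Longrightarrow> i \<noteq> j \<Longrightarrow> (cmod (cnj (A i) * A j + cnj (B i) * B j))\<^sup>2 = 1/3"
  shows "(\<Sum>i<4. A i * cnj (A i)) = 2" and "(\<Sum>i<4. B i * cnj (B i)) = 2" and "(\<Sum>i<4. A i * cnj (B i)) = 0"
proof -
  define x where "x = (\<Sum>i<4::nat. (cmod (A i))\<^sup>2)"
  define y where "y = (\<Sum>i<4::nat. (cmod (B i))\<^sup>2)"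
  define Z where "Z = (\<Sum>i<4. A i * cnj (B i))"
  have x: "(\<Sum>i<4. A i * cnj (A i)) = complex_of_real x" and y: "(\<Sum>i<4. B i * cnj (B i)) = complex_of_real y"
    unfolding x_def y_def by (simp_all add: of_real_cmod_power2)
  have "complex_of_real (x + y) = (\<Sum>i<4. cnj (A i) * A i + cnj (B i) * B i)"
    unfolding of_real_add x[symmetric] y[symmetric] by (simp add: sum.distrib mult.commute)
  also have "\<dots> = 4"
    using norm by simp
  finally have "x + y = 4"
    by (metis of_real_numeral of_real_eq_iff)
  have diag: "(cmod (cnj (A i) * A i + cnj (B i) * B i))\<^sup>2 = 1" if "i < 4" for i
    using norm[OF that] by simp
  have "x\<^sup>2 + y\<^sup>2 + 2 * (cmod Z)\<^sup>2 = (\<Sum>i<4::nat. \<Sum>j<4::nat. if i = j then 1 else 1/3)"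
    unfolding x_def y_def Z_def frame_potential_2[symmetric]
    by (intro sum.cong refl) (simp add: diag overlap)
  also have "\<dots> = 8"
    by (simp add: sum_lessThan_4)
  finally have "(x - 2)\<^sup>2 + (y - 2)\<^sup>2 + 2 * (cmod Z)\<^sup>2 = 0"
    using \<open>x + y = 4\<close> by (simp add: power2_eq_square algebra_simps)
  moreover have "(x - 2)\<^sup>2 \<ge> 0" "(y - 2)\<^sup>2 \<ge> 0" "(cmod Z)\<^sup>2 \<ge> 0"
    by simp_all
  ultimately have "(x - 2)\<^sup>2 = 0" "(y - 2)\<^sup>2 = 0" "(cmod Z)\<^sup>2 = 0"
    by linarith+
  then have "x = 2" "y = 2" "Z = 0"
    by simp_all
  then show "(\<Sum>i<4. A i * cnj (A i)) = 2" "(\<Sum>i<4. B i * cnj (B i)) = 2" "(\<Sum>i<4. A i * cnj (B i)) = 0"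
    using x y Z_def by simp_all
qed

lemma sic_set_dim: "sic_set \<psi> \<Longrightarrow> i < 4 \<Longrightarrow> dim_vec (\<psi> i) = 2"
  unfolding sic_set_def by (auto dest: carrier_vecD)

lemma braket_2: "dim_vec u = 2 \<Longrightarrow> braket u v = cnj (u $ 0) * v $ 0 + cnj (u $ 1) * v $ 1"
  by (simp add: braket_def sum_lessThan_2)

lemma sic_set_norm:
  assumes "sic_set \<psi>" and "i < 4"
  shows "cnj (\<psi> i $ 0) * \<psi> i $ 0 + cnj (\<psi> i $ 1) * \<psi> i $ 1 = 1"
proof -
  have "braket (\<psi> i) (\<psi> i) = 1"
    using assms unfolding sic_set_def by blast
  then show ?thesis
    by (simp only: braket_2[OF sic_set_dim[OF assms]])
qed

lemma sic_set_overlap: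
  assumes "sic_set \<psi>" and "i < 4" and "j < 4" and "i \<noteq> j"
  shows "(cmod (cnj (\<psi> i $ 0) * \<psi> j $ 0 + cnj (\<psi> i $ 1) * \<psi> j $ 1))\<^sup>2 = 1/3"
proof -
  have "(cmod (braket (\<psi> i) (\<psi> j)))\<^sup>2 = 1/3"
    using assms unfolding sic_set_def by blast
  then show ?thesis
    by (simp only: braket_2[OF sic_set_dim[OF assms(1,2)]])
qed

lemma sic_resolution:
  assumes S: "sic_set \<psi>" and "a < 2" and "b < 2"
  shows "(\<Sum>i<4. \<psi> i $ a * cnj (\<psi> i $ b)) = (if a = b then 2 else 0)"
proof -
  have tight: "(\<Sum>i<4. \<psi> i $ 0 * cnj (\<psi> i $ 0)) = 2" "(\<Sum>i<4. \<psi> i $ 1 * cnj (\<psi> i $ 1)) = 2"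
      "(\<Sum>i<4. \<psi> i $ 0 * cnj (\<psi> i $ 1)) = 0"
    using equiangular_tight_frame_2[of "\<lambda>i. \<psi> i $ 0" "\<lambda>i. \<psi> i $ 1"]
      sic_set_norm[OF S] sic_set_overlap[OF S] by blast+
  have "(\<Sum>i<4. \<psi> i $ 1 * cnj (\<psi> i $ 0)) = cnj (\<Sum>i<4. \<psi> i $ 0 * cnj (\<psi> i $ 1))"
    by (simp add: mult.commute)
  then have "(\<Sum>i<4. \<psi> i $ 1 * cnj (\<psi> i $ 0)) = 0"
    by (simp only: tight(3) complex_cnj_zero)
  moreover have "a = 0 \<or> a = 1" "b = 0 \<or> b = 1"
    using assms by auto
  ultimately show ?thesis
    using tight by auto
qed

definition shadow_factor :: "(nat \<Rightarrow> complex vec) \<Rightarrow> nat \<Rightarrow> complex mat" where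
  "shadow_factor \<psi> i = 3 \<cdot>\<^sub>m proj (\<psi> i) - 1\<^sub>m 2"

lemma dim_shadow_factor [simp]:
  "dim_row (shadow_factor \<psi> i) = 2" "dim_col (shadow_factor \<psi> i) = 2"
  by (simp_all add: shadow_factor_def)

lemma shadow_factor_carrier: "shadow_factor \<psi> i \<in> carrier_mat 2 2"
  by (intro carrier_matI) simp_all

lemma index_shadow_factor:
  "sic_set \<psi> \<Longrightarrow> i < 4 \<Longrightarrow> a < 2 \<Longrightarrow> b < 2 \<Longrightarrow>
    shadow_factor \<psi> i $$ (a, b) = 3 * (\<psi> i $ a * cnj (\<psi> i $ b)) - (if a = b then 1 else 0)"
  using sic_set_dim[of \<psi> i] by (simp add: shadow_factor_def proj_def)

lemma sic_shadow_Nil: "sic_shadow \<psi> [] = 1\<^sub>m 1"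
  by (simp add: sic_shadow_def tensor_mats_def)

lemma sic_shadow_Cons: "sic_shadow \<psi> (i # is) = kron_mat (shadow_factor \<psi> i) (sic_shadow \<psi> is)"
  by (simp add: sic_shadow_def tensor_mats_def shadow_factor_def)

lemma sic_shadow_carrier: "sic_shadow \<psi> is \<in> carrier_mat (2 ^ length is) (2 ^ length is)"
proof (induction "is")
  case (Cons i "is")
  then have "dim_row (sic_shadow \<psi> is) = 2 ^ length is" "dim_col (sic_shadow \<psi> is) = 2 ^ length is"
    by auto
  then show ?case
    unfolding sic_shadow_Cons by (intro carrier_matI) simp_all
qed (simp add: sic_shadow_Nil)

text \<open>With the SIC overlaps, \<open>tr (Q\<^sub>i Q\<^sub>j) = 9 |\<langle>\<psi>\<^sub>i|\<psi>\<^sub>j\<rangle>|\<^sup>2 - 4\<close> is \<open>5\<close> on the diagonal and \<open>-1\<close> off it.\<close>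
lemma shadow_factor_gram:
  assumes S: "sic_set \<psi>" and i: "i < 4" and j: "j < 4"
  shows "(\<Sum>a<2. \<Sum>b<2. shadow_factor \<psi> i $$ (a, b) * cnj (shadow_factor \<psi> j $$ (a, b))) =
    (if i = j then 6 else 0) - 1"
proof -
  let ?w = "cnj (\<psi> i $ 0) * \<psi> j $ 0 + cnj (\<psi> i $ 1) * \<psi> j $ 1"
  have expand: "(\<Sum>a<2. \<Sum>b<2. (3 * (u a * cnj (u b)) - (if a = b then 1 else 0)) *
        cnj (3 * (v a * cnj (v b)) - (if a = b then 1 else 0)))
      = 9 * ((cnj (u 0) * v 0 + cnj (u 1) * v 1) * cnj (cnj (u 0) * v 0 + cnj (u 1) * v 1))
        - 3 * (cnj (u 0) * u 0 + cnj (u 1) * u 1) - 3 * (cnj (v 0) * v 0 + cnj (v 1) * v 1) + 2"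
    for u v :: "nat \<Rightarrow> complex"
    by (simp add: sum_lessThan_2) (simp add: algebra_simps)
  have "(\<Sum>a<2. \<Sum>b<2. shadow_factor \<psi> i $$ (a, b) * cnj (shadow_factor \<psi> j $$ (a, b))) =
      9 * (?w * cnj ?w) - 3 * 1 - 3 * 1 + 2"
    unfolding expand[of "\<lambda>k. \<psi> i $ k" "\<lambda>k. \<psi> j $ k", symmetric, unfolded sic_set_norm[OF S i] sic_set_norm[OF S j]]
    by (intro sum.cong refl) (simp add: index_shadow_factor[OF S i] index_shadow_factor[OF S j])
  also have "\<dots> = (if i = j then 6 else 0) - 1"
  proof (cases "i = j")
    case True
    then show ?thesis
      using sic_set_norm[OF S i] by simp
  next
    case False
    then have w: "?w * cnj ?w = 1/3"
      using sic_set_overlap[OF S i j] complex_norm_square[of ?w] by (metis of_real_divide of_real_1 of_real_numeral)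
    have "9 * (?w * cnj ?w) - 3 * 1 - 3 * 1 + 2 = (-1 :: complex)"
      by (simp only: w) simp
    with False show ?thesis by simp
  qed
  finally show ?thesis .
qed

section \<open>Outcome probabilities\<close>

lemma dim_tensor_vecs_outcome:
  assumes S: "sic_set \<psi>" and "is \<in> outcomes N"
  shows "dim_vec (tensor_vecs (map \<psi> is)) = 2 ^ N"
proof -
  have "set is \<subseteq> {..<4}" and len: "length is = N"
    using assms(2) by (auto simp: outcomes_def)
  then have "dim_vec (tensor_family (replicate N \<psi>) is) = 2 ^ length (replicate N \<psi>)"
    by (intro dim_tensor_family[where m = 4]) (auto simp: sic_set_dim[OF S])
  then show ?thesis
    using len by (simp add: tensor_family_replicate)
qed

lemma sum_sic_prob:
  assumes S: "sic_set \<psi>" and D: "density_mat N \<rho>"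
  shows "(\<Sum>is\<in>outcomes N. sic_prob \<psi> N \<rho> is) = 1"
proof -
  have \<rho>: "\<rho> \<in> carrier_mat (2 ^ N) (2 ^ N)" and tr: "mat_trace \<rho> = 1"
    using D by (auto simp: density_mat_def)
  have res: "(\<Sum>is\<in>outcomes N. tensor_vecs (map \<psi> is) $ y * cnj (tensor_vecs (map \<psi> is) $ x)) =
      (if x = y then 2 ^ N else 0)" if "x < 2 ^ N" "y < 2 ^ N" for x y
  proof -
    have "(\<Sum>ks\<in>{ks. set ks \<subseteq> {..<4} \<and> length ks = length (replicate N \<psi>)}.
        tensor_family (replicate N \<psi>) ks $ y * cnj (tensor_family (replicate N \<psi>) ks $ x)) =
        (if y = x then 2 ^ length (replicate N \<psi>) else 0)"
      using that by (intro tensor_family_resolution) (auto simp: sic_set_dim[OF S] sic_resolution[OF S])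
    moreover have "tensor_family (replicate N \<psi>) ks = tensor_vecs (map \<psi> ks)" if "ks \<in> outcomes N" for ks
      using that by (simp add: outcomes_def tensor_family_replicate)
    ultimately show ?thesis
      by (simp add: outcomes_eq[symmetric] eq_commute[of y x])
  qed
  have "(\<Sum>is\<in>outcomes N. braket (tensor_vecs (map \<psi> is)) (\<rho> *\<^sub>v tensor_vecs (map \<psi> is))) = 2 ^ N"
    using sum_braket_resolution[OF finite_outcomes dim_tensor_vecs_outcome[OF S] res \<rho>] tr by simp
  then have "(\<Sum>is\<in>outcomes N. Re (braket (tensor_vecs (map \<psi> is)) (\<rho> *\<^sub>v tensor_vecs (map \<psi> is)))) = 2 ^ N"
    by (metis Re_sum Re_complex_of_real of_real_numeral of_real_power)
  then show ?thesis
    unfolding sic_prob_def Let_def by (simp add: sum_divide_distrib[symmetric])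
qed

lemma braket_le_trace_of_resolution:
  assumes "finite S" and "s \<in> S" and dims: "\<And>s. s \<in> S \<Longrightarrow> dim_vec (v s) = n"
    and res: "\<And>x y. x < n \<Longrightarrow> y < n \<Longrightarrow> (\<Sum>s\<in>S. v s $ y * cnj (v s $ x)) = (if x = y then 1 else 0)"
    and A: "A \<in> carrier_mat n n" and psd: "\<And>u. u \<in> carrier_vec n \<Longrightarrow> 0 \<le> Re (braket u (A *\<^sub>v u))"
  shows "Re (braket (v s) (A *\<^sub>v v s)) \<le> Re (mat_trace A)"
proof -
  have "0 \<le> Re (braket (v t) (A *\<^sub>v v t))" if "t \<in> S" for t
    using psd[OF carrier_vecI[OF dims[OF that]]] .
  then have "Re (braket (v s) (A *\<^sub>v v s)) \<le> (\<Sum>s\<in>S. Re (braket (v s) (A *\<^sub>v v s)))"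
    using \<open>finite S\<close> \<open>s \<in> S\<close> by (intro member_le_sum) auto
  also have "\<dots> = Re (mat_trace A)"
    using sum_braket_resolution[OF \<open>finite S\<close> dims res A] by (simp flip: Re_sum)
  finally show ?thesis .
qed

lemma tensor_basis_braket_le_trace:
  assumes dims: "\<And>f k. f \<in> set fs \<Longrightarrow> k < d \<Longrightarrow> dim_vec (f k) = d"
    and res: "\<And>f a b. f \<in> set fs \<Longrightarrow> a < d \<Longrightarrow> b < d \<Longrightarrow>
      (\<Sum>k<d. f k $ a * cnj (f k $ b)) = (if a = b then 1 else 0)"
    and ks: "set ks \<subseteq> {..<d}" "length ks = length fs"
    and A: "A \<in> carrier_mat (d ^ length fs) (d ^ length fs)"
    and psd: "\<And>u. u \<in> carrier_vec (d ^ length fs) \<Longrightarrow> 0 \<le> Re (braket u (A *\<^sub>v u))"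
  shows "Re (braket (tensor_family fs ks) (A *\<^sub>v tensor_family fs ks)) \<le> Re (mat_trace A)"
proof (rule braket_le_trace_of_resolution[where v = "tensor_family fs", OF _ _ _ _ A psd])
  let ?K = "{ks. set ks \<subseteq> {..<d} \<and> length ks = length fs}"
  show "finite ?K"
    by (simp add: finite_lists_length_eq)
  show "ks \<in> ?K"
    using ks by simp
  show "dim_vec (tensor_family fs ks') = d ^ length fs" if "ks' \<in> ?K" for ks'
  proof (rule dim_tensor_family[where m = d])
    show "dim_vec (f k) = d" if "f \<in> set fs" "k < d" for f k
      using dims[OF that] .
  qed (use that in auto)
  show "(\<Sum>ks\<in>?K. tensor_family fs ks $ y * cnj (tensor_family fs ks $ x)) = (if x = y then 1 else 0)"
    if "x < d ^ length fs" "y < d ^ length fs" for x y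
  proof -
    have "(\<Sum>ks\<in>?K. tensor_family fs ks $ y * cnj (tensor_family fs ks $ x)) = (if y = x then 1 ^ length fs else 0)"
    proof (rule tensor_family_resolution[where m = d and d = d])
      show "dim_vec (f k) = d" if "f \<in> set fs" "k < d" for f k
        using dims[OF that] .
      show "(\<Sum>k<d. f k $ a * cnj (f k $ b)) = (if a = b then 1 else 0)" if "f \<in> set fs" "a < d" "b < d" for f a b
        using res[OF that] .
    qed (use that in auto)
    then show ?thesis by auto
  qed
qed

definition perp :: "complex vec \<Rightarrow> complex vec" where
  "perp v = vec 2 (\<lambda>k. if k = 0 then - cnj (v $ 1) else cnj (v $ 0))"

lemma perp_resolution:
  assumes "cnj (v $ 0) * v $ 0 + cnj (v $ 1) * v $ 1 = 1" and "a < 2" and "b < 2"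
  shows "(\<Sum>k<2::nat. (if k = 0 then v else perp v) $ a * cnj ((if k = 0 then v else perp v) $ b)) =
    (if a = b then 1 else 0)"
proof -
  have "a = 0 \<or> a = 1" "b = 0 \<or> b = 1"
    using assms by auto
  then show ?thesis
    using assms(1) by (auto simp: sum_lessThan_2 perp_def algebra_simps)
qed

text \<open>Complete every \<open>\<psi>\<^sub>i\<close> to the orthonormal basis \<open>(\<psi>\<^sub>i, perp \<psi>\<^sub>i)\<close>; the product vector
  \<open>\<psi>\<^sub>i\<^sub>1 \<otimes> \<dots> \<otimes> \<psi>\<^sub>i\<^sub>N\<close> then belongs to the product basis.\<close>
lemma sic_prob_le:
  assumes S: "sic_set \<psi>" and D: "density_mat N \<rho>" and "is \<in> outcomes N"
  shows "sic_prob \<psi> N \<rho> is \<le> 1 / 2 ^ N"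
proof -
  have \<rho>: "\<rho> \<in> carrier_mat (2 ^ N) (2 ^ N)" and tr: "mat_trace \<rho> = 1"
    and psd: "\<And>u. u \<in> carrier_vec (2 ^ N) \<Longrightarrow> 0 \<le> Re (braket u (\<rho> *\<^sub>v u))"
    using D by (auto simp: density_mat_def)
  have len: "length is = N" and "set is \<subseteq> {..<4}"
    using assms(3) by (auto simp: outcomes_def)
  define fs where "fs = map (\<lambda>i (k::nat). if k = 0 then \<psi> i else perp (\<psi> i)) is"
  have "length fs = N"
    using len by (simp add: fs_def)
  have "Re (braket (tensor_family fs (replicate N 0)) (\<rho> *\<^sub>v tensor_family fs (replicate N 0))) \<le> Re (mat_trace \<rho>)"
  proof (rule tensor_basis_braket_le_trace)
    show "dim_vec (f k) = 2" if "f \<in> set fs" "k < 2" for f k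
      using that \<open>set is \<subseteq> {..<4}\<close> by (auto simp: fs_def perp_def sic_set_dim[OF S])
    show "(\<Sum>k<2. f k $ a * cnj (f k $ b)) = (if a = b then 1 else 0)"
      if f_in: "f \<in> set fs" and ab: "a < 2" "b < 2" for f a b
    proof -
      obtain i where "i \<in> set is" and f: "f = (\<lambda>k. if k = 0 then \<psi> i else perp (\<psi> i))"
        using f_in unfolding fs_def set_map by blast
      then have "i < 4"
        using \<open>set is \<subseteq> {..<4}\<close> by auto
      show ?thesis
        unfolding f by (rule perp_resolution[OF sic_set_norm[OF S \<open>i < 4\<close>] ab])
    qed
  qed (use \<rho> psd \<open>length fs = N\<close> in \<open>auto simp: set_replicate_conv_if\<close>)
  moreover have "tensor_family fs (replicate N 0) = tensor_vecs (map \<psi> is)"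
    using tensor_family_diagonal[of _ "is" 0] len by (simp add: fs_def)
  ultimately show ?thesis
    unfolding sic_prob_def Let_def using tr by (simp add: divide_right_mono)
qed

section \<open>Second moment of the shadow\<close>

text \<open>\<open>ptrace_first n Q A\<close> is the partial trace over the first tensor factor of \<open>(Q \<otimes> 1\<^sub>n) A\<close>.\<close>
definition ptrace_first :: "nat \<Rightarrow> complex mat \<Rightarrow> complex mat \<Rightarrow> complex mat" where
  "ptrace_first n Q A = mat n n (\<lambda>(a, b).
     \<Sum>a1<dim_row Q. \<Sum>b1<dim_row Q. Q $$ (b1, a1) * A $$ (a1 * n + a, b1 * n + b))"

lemma dim_ptrace_first [simp]:
  "dim_row (ptrace_first n Q A) = n" "dim_col (ptrace_first n Q A) = n"
  by (simp_all add: ptrace_first_def)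

lemma ptrace_first_carrier: "ptrace_first n Q A \<in> carrier_mat n n"
  by (intro carrier_matI) simp_all

lemma mult_add_less_mult:
  fixes k b d n :: nat
  assumes "k < d" and "b < n"
  shows "k * n + b < d * n"
proof -
  have "k * n + b < Suc k * n"
    using \<open>b < n\<close> by simp
  also have "\<dots> \<le> d * n"
    using \<open>k < d\<close> by (intro mult_le_mono1) simp
  finally show ?thesis .
qed

lemma trace_mult_kron:
  assumes A: "A \<in> carrier_mat (d * n) (d * n)" and Q: "Q \<in> carrier_mat d d" and T: "T \<in> carrier_mat n n"
  shows "mat_trace (A * kron_mat Q T) = mat_trace (ptrace_first n Q A * T)"
proof -
  let ?P = "{..<d} \<times> {..<d}"
  have K: "kron_mat Q T \<in> carrier_mat (d * n) (d * n)"
    using Q T by (intro carrier_matI) auto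
  have kron: "kron_mat Q T $$ (snd p * n + b, fst p * n + a) = Q $$ (snd p, fst p) * T $$ (b, a)"
    if "p \<in> ?P" "a \<in> {..<n}" "b \<in> {..<n}" for p a b
    using that Q T by (auto simp: index_kron_mat mult_add_less_mult)
  have "mat_trace (A * kron_mat Q T) =
      (\<Sum>a<n. \<Sum>b<n. \<Sum>p\<in>?P. A $$ (fst p * n + a, snd p * n + b) * kron_mat Q T $$ (snd p * n + b, fst p * n + a))"
    unfolding mat_trace_mult[OF A K] by (rule sum_lessThan_mult_square)
  also have "\<dots> = (\<Sum>a<n. \<Sum>b<n. \<Sum>p\<in>?P. Q $$ (snd p, fst p) * A $$ (fst p * n + a, snd p * n + b) * T $$ (b, a))"
    by (intro sum.cong refl) (simp only: kron, simp only: mult_ac)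
  also have "\<dots> = (\<Sum>a<n. \<Sum>b<n. ptrace_first n Q A $$ (a, b) * T $$ (b, a))"
  proof (intro sum.cong refl)
    fix a b assume "a \<in> {..<n}" "b \<in> {..<n}"
    then have "ptrace_first n Q A $$ (a, b) = (\<Sum>p\<in>?P. Q $$ (snd p, fst p) * A $$ (fst p * n + a, snd p * n + b))"
      using Q by (simp add: ptrace_first_def sum.cartesian_product split_def)
    then show "(\<Sum>p\<in>?P. Q $$ (snd p, fst p) * A $$ (fst p * n + a, snd p * n + b) * T $$ (b, a)) =
        ptrace_first n Q A $$ (a, b) * T $$ (b, a)"
      by (simp only: sum_distrib_right)
  qed
  also have "\<dots> = mat_trace (ptrace_first n Q A * T)"
    by (rule mat_trace_mult[OF ptrace_first_carrier T, symmetric])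
  finally show ?thesis .
qed

lemma sum_frobenius_ptrace_shadow_factor_le:
  assumes S: "sic_set \<psi>" and A: "A \<in> carrier_mat (2 * n) (2 * n)"
  shows "(\<Sum>i<4. frobenius_norm_sq (ptrace_first n (shadow_factor \<psi> i) A)) \<le> 6 * frobenius_norm_sq A"
proof -
  let ?P = "{..<2::nat} \<times> {..<2::nat}"
  define q where "q i p = cnj (shadow_factor \<psi> i $$ (snd p, fst p))" for i and p :: "nat \<times> nat"
  define M where "M a b p = A $$ (fst p * n + a, snd p * n + b)" for a b and p :: "nat \<times> nat"
  have entry: "ptrace_first n (shadow_factor \<psi> i) A $$ (a, b) = (\<Sum>p\<in>?P. cnj (q i p) * M a b p)"
    if "a < n" "b < n" for i a b
    using that by (simp add: ptrace_first_def q_def M_def sum.cartesian_product split_def)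
  have gram: "(\<Sum>p\<in>?P. cnj (q i p) * q j p) = (if i = j then of_real 6 else 0) - of_real 1"
    if "i \<in> {..<4}" "j \<in> {..<4}" for i j
  proof -
    have "(\<Sum>p\<in>?P. cnj (q i p) * q j p) =
        (\<Sum>a<2. \<Sum>b<2. shadow_factor \<psi> i $$ (b, a) * cnj (shadow_factor \<psi> j $$ (b, a)))"
      by (simp add: q_def sum.cartesian_product split_def)
    also have "\<dots> = (\<Sum>b<2. \<Sum>a<2. shadow_factor \<psi> i $$ (b, a) * cnj (shadow_factor \<psi> j $$ (b, a)))"
      by (rule sum.swap)
    finally show ?thesis
      using shadow_factor_gram[OF S] that by simp
  qed
  have "(\<Sum>i<4. frobenius_norm_sq (ptrace_first n (shadow_factor \<psi> i) A)) =
      (\<Sum>a<n. \<Sum>b<n. \<Sum>i<4. (cmod (\<Sum>p\<in>?P. cnj (q i p) * M a b p))\<^sup>2)"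
    by (simp add: frobenius_norm_sq_def entry sum.swap[of _ "{..<4}"])
  also have "\<dots> \<le> (\<Sum>a<n. \<Sum>b<n. 6 * (\<Sum>p\<in>?P. (cmod (M a b p))\<^sup>2))"
    by (intro sum_mono frame_bound_of_gram[of _ 6 1] gram) auto
  also have "\<dots> = 6 * frobenius_norm_sq A"
    using A by (simp add: frobenius_norm_sq_def sum_lessThan_mult_square M_def sum_distrib_left)
  finally show ?thesis .
qed

lemma sum_trace_sic_shadow_sq_le:
  assumes S: "sic_set \<psi>" and "A \<in> carrier_mat (2 ^ N) (2 ^ N)"
  shows "(\<Sum>is\<in>outcomes N. (cmod (mat_trace (A * sic_shadow \<psi> is)))\<^sup>2) \<le> 6 ^ N * frobenius_norm_sq A"
  using assms(2)
proof (induction N arbitrary: A)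
  case 0
  have "outcomes 0 = {[]}"
    by (auto simp: outcomes_def)
  moreover have "mat_trace (A * sic_shadow \<psi> []) = A $$ (0, 0)"
    using 0 by (simp add: sic_shadow_Nil mat_trace_def)
  ultimately show ?case
    using 0 by (simp add: frobenius_norm_sq_def)
next
  case (Suc N)
  let ?B = "\<lambda>i. ptrace_first (2 ^ N) (shadow_factor \<psi> i) A"
  have A: "A \<in> carrier_mat (2 * 2 ^ N) (2 * 2 ^ N)"
    using Suc.prems by simp
  have "mat_trace (A * sic_shadow \<psi> (i # is)) = mat_trace (?B i * sic_shadow \<psi> is)"
    if "is \<in> outcomes N" for i "is"
    using that sic_shadow_carrier[of \<psi> "is"] unfolding sic_shadow_Cons
    by (intro trace_mult_kron[OF A shadow_factor_carrier]) (simp add: outcomes_def)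
  then have "(\<Sum>is\<in>outcomes (Suc N). (cmod (mat_trace (A * sic_shadow \<psi> is)))\<^sup>2) =
      (\<Sum>i<4. \<Sum>is\<in>outcomes N. (cmod (mat_trace (?B i * sic_shadow \<psi> is)))\<^sup>2)"
    unfolding sum_outcomes_Suc by simp
  also have "\<dots> \<le> (\<Sum>i<4. 6 ^ N * frobenius_norm_sq (?B i))"
    by (intro sum_mono Suc.IH ptrace_first_carrier)
  also have "\<dots> \<le> 6 ^ N * (6 * frobenius_norm_sq A)"
    unfolding sum_distrib_left[symmetric]
    by (intro mult_left_mono sum_frobenius_ptrace_shadow_factor_le[OF S A]) simp
  finally show ?case
    by simp
qed

section \<open>The variance bound\<close>

lemma cmod_diff_power2: "(cmod (x - y))\<^sup>2 = (cmod x)\<^sup>2 - 2 * Re (x * cnj y) + (cmod y)\<^sup>2"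
  unfolding cmod_power2 by (simp add: power2_eq_square algebra_simps)

lemma variance_le_second_moment:
  fixes p :: "'a \<Rightarrow> real" and X :: "'a \<Rightarrow> complex"
  assumes "(\<Sum>a\<in>A. p a) = 1"
  shows "(\<Sum>a\<in>A. p a * (cmod (X a - (\<Sum>b\<in>A. of_real (p b) * X b)))\<^sup>2) \<le> (\<Sum>a\<in>A. p a * (cmod (X a))\<^sup>2)"
proof -
  define \<mu> where "\<mu> = (\<Sum>b\<in>A. of_real (p b) * X b)"
  have "(\<Sum>a\<in>A. p a * (cmod (X a - \<mu>))\<^sup>2) =
      (\<Sum>a\<in>A. p a * (cmod (X a))\<^sup>2) - 2 * (\<Sum>a\<in>A. p a * Re (X a * cnj \<mu>)) + (\<Sum>a\<in>A. p a) * (cmod \<mu>)\<^sup>2"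
    by (simp add: cmod_diff_power2 algebra_simps sum.distrib sum_subtractf sum_distrib_left sum_distrib_right)
  also have "(\<Sum>a\<in>A. p a * Re (X a * cnj \<mu>)) = Re (\<mu> * cnj \<mu>)"
    unfolding \<mu>_def by (simp add: sum_distrib_right Re_sum mult.assoc)
  also have "Re (\<mu> * cnj \<mu>) = (cmod \<mu>)\<^sup>2"
    by (simp add: complex_norm_square[symmetric])
  finally show ?thesis
    unfolding \<mu>_def[symmetric] using assms by simp
qed

text \<open>The bound also holds for \<open>N = 0\<close>.\<close>
theorem mainTheorem1:
  fixes N :: nat and \<psi> :: "nat \<Rightarrow> complex vec" and \<rho> Obs :: "complex mat"
  assumes "N \<ge> 1"
    and "sic_set \<psi>"
    and "density_mat N \<rho>"
    and "Obs \<in> carrier_mat (2^N) (2^N)" and "hermitian_mat Obs"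
  shows "sic_var \<psi> N \<rho> (\<lambda>is. mat_trace (Obs * sic_shadow \<psi> is)) \<le> 3^N * Re (mat_trace (Obs * Obs))"
proof -
  define X where "X is = mat_trace (Obs * sic_shadow \<psi> is)" for "is"
  have "sic_var \<psi> N \<rho> X \<le> (\<Sum>is\<in>outcomes N. sic_prob \<psi> N \<rho> is * (cmod (X is))\<^sup>2)"
    unfolding sic_var_def sic_expect_def by (rule variance_le_second_moment[OF sum_sic_prob[OF assms(2,3)]])
  also have "\<dots> \<le> (\<Sum>is\<in>outcomes N. (cmod (X is))\<^sup>2 / 2 ^ N)"
  proof (rule sum_mono)
    fix "is" assume "is \<in> outcomes N"
    from sic_prob_le[OF assms(2,3) this] show "sic_prob \<psi> N \<rho> is * (cmod (X is))\<^sup>2 \<le> (cmod (X is))\<^sup>2 / 2 ^ N"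
      using mult_right_mono[of _ _ "(cmod (X is))\<^sup>2"] by fastforce
  qed
  also have "\<dots> = (\<Sum>is\<in>outcomes N. (cmod (X is))\<^sup>2) / 2 ^ N"
    by (simp add: sum_divide_distrib)
  also have "\<dots> \<le> 6 ^ N * frobenius_norm_sq Obs / 2 ^ N"
    unfolding X_def by (intro divide_right_mono sum_trace_sic_shadow_sq_le assms) simp
  also have "\<dots> = 3 ^ N * Re (mat_trace (Obs * Obs))"
  proof -
    have "(6::real) ^ N = 2 ^ N * 3 ^ N"
      by (simp flip: power_mult_distrib)
    then show ?thesis
      by (simp add: hermitian_trace_square[OF assms(4,5)])
  qed
  finally show ?thesis
    unfolding X_def .
qed

end
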